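(* Let $k \ge 1$ be an integer and let $n > 1$. Let $\mathcal{R}$ be any deterministic algorithm that, given access to an unknown database only through the top-$k$ range-query interface described in the context, always outputs the tuple of the database with the smallest value of $A$. Then there exist a database $D$ of $n$ tuples over the single attribute $A$ and a system ranking function (that is, a rule for choosing which $k$ matching tuples are returned by each overflowing query) such that, on $D$, the algorithm $\mathcal{R}$ issues at least $n/k$ queries before it outputs the tuple with the smallest value of $A$. Equivalently, in the worst case, finding the top-ranked tuple on one attribute through a top-$k$ interface can require as many queries as it takes to retrieve all $n$ tuples.
   Context: A database $D$ is a finite set of tuples with a single ordinal (real-valued) attribute $A$ whose value domain is the open interval $(v_0, v_\infty)$ of the reals, $v_0 < v_\infty$. Distinct tuples have distinct $A$-values. An algorithm may access $D$ only by issuing queries of the form "SELECT * FROM $D$ WHERE $A \in (v_1, v_2)$" with $v_0 \le v_1 < v_2 \le v_\infty$. Let $R(q)$ denote the set of tuples whose $A$-value lies in $(v_1, v_2)$. If $|R(q)| \le k$ the interface returns all of $R(q)$. If $|R(q)| > k$ (the query "overflows") it returns some $k$ tuples of $R(q)$, chosen by a proprietary system ranking function about which the algorithm knows nothing. This choice is arbitrary and may depend on the previously issued queries. The cost of an algorithm is the number of queries it issues. *)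

theory Defs
  imports Main "HOL-Library.Extended_Real"
begin

text \<open>Tuples are identified with their (pairwise distinct) A-values, so a database
  is a finite set of reals lying in the open interval between v0 and vinf.\<close>

type_synonym query = "real \<times> real"
type_synonym history = "(query \<times> real set) list"

datatype action = Query real real | Output real

type_synonym algorithm = "history \<Rightarrow> action"

type_synonym ranking = "history \<Rightarrow> query \<Rightarrow> real set"

definition valid_db :: "real \<Rightarrow> real \<Rightarrow> real set \<Rightarrow> bool" where
  "valid_db v0 vinf D \<longleftrightarrow> finite D \<and> D \<subseteq> {v0<..<vinf}"

definition valid_query :: "real \<Rightarrow> real \<Rightarrow> query \<Rightarrow> bool" where
  "valid_query v0 vinf q \<longleftrightarrow> v0 \<le> fst q \<and> fst q < snd q \<and> snd q \<le> vinf"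

definition matching :: "real set \<Rightarrow> query \<Rightarrow> real set" where
  "matching D q = {t \<in> D. fst q < t \<and> t < snd q}"

definition valid_ranking :: "nat \<Rightarrow> real set \<Rightarrow> ranking \<Rightarrow> bool" where
  "valid_ranking k D rk \<longleftrightarrow>
     (\<forall>h q. card (matching D q) > k \<longrightarrow>
        rk h q \<subseteq> matching D q \<and> card (rk h q) = k)"

definition answer :: "nat \<Rightarrow> real set \<Rightarrow> ranking \<Rightarrow> history \<Rightarrow> query \<Rightarrow> real set" where
  "answer k D rk h q = (if card (matching D q) \<le> k then matching D q else rk h q)"

fun run :: "nat \<Rightarrow> algorithm \<Rightarrow> real set \<Rightarrow> ranking \<Rightarrow> nat \<Rightarrow> history" where
  "run k alg D rk 0 = []"
| "run k alg D rk (Suc m) =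
     (let h = run k alg D rk m in
      case alg h of
        Query a b \<Rightarrow> h @ [((a, b), answer k D rk h (a, b))]
      | Output t \<Rightarrow> h)"

definition correct_min_alg :: "real \<Rightarrow> real \<Rightarrow> nat \<Rightarrow> algorithm \<Rightarrow> bool" where
  "correct_min_alg v0 vinf k alg \<longleftrightarrow>
     (\<forall>D rk. valid_db v0 vinf D \<and> D \<noteq> {} \<and> valid_ranking k D rk \<longrightarrow>
        (\<forall>m a b. alg (run k alg D rk m) = Query a b \<longrightarrow> valid_query v0 vinf (a, b)) \<and>
        (\<exists>m. alg (run k alg D rk m) = Output (Min D)))"

end

theory Submission
  imports Defs
begin

text \<open>The adversary builds the database lazily. Tuples not yet returned are kept
  in a shrinking interval just above \<open>v0\<close>: a query starting above \<open>v0\<close> sees none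
  of them, while a query starting at \<open>v0\<close> sees all of them and is answered with
  already returned tuples first, topped up with fresh ones. Hence every query reveals
  at most \<open>k\<close> new tuples. If the algorithm stopped after fewer than \<open>n / k\<close> queries,
  some tuple would still be hidden, and hiding it below the output would give a
  database consistent with all answers on which the output is not the minimum.\<close>

lemma run_Output_stable:
  assumes "alg (run k alg D rk m) = Output t" and "m \<le> m'"
  shows "run k alg D rk m' = run k alg D rk m"
  using assms(2) by (induction rule: dec_induct) (use assms(1) in auto)

lemma length_run_mono:
  "m \<le> m' \<Longrightarrow> length (run k alg D rk m) \<le> length (run k alg D rk m')"
  by (rule lift_Suc_mono_le[of "\<lambda>m. length (run k alg D rk m)"])
    (auto simp: Let_def split: action.split)

lemma length_run_le_Output:
  assumes "alg (run k alg D rk m) = Output t"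
  shows "length (run k alg D rk m') \<le> length (run k alg D rk m)"
proof -
  have "length (run k alg D rk m') \<le> length (run k alg D rk (max m m'))"
    by (rule length_run_mono) simp
  also have "run k alg D rk (max m m') = run k alg D rk m"
    using assms by (rule run_Output_stable) simp
  finally show ?thesis .
qed

lemma run_Output_unique:
  assumes "alg (run k alg D rk m) = Output s" and "alg (run k alg D rk m') = Output t"
  shows "s = t"
  using run_Output_stable[of alg k D rk m s "max m m'"]
    run_Output_stable[of alg k D rk m' t "max m m'"] assms
  by simp

lemma finite_matching: "finite D \<Longrightarrow> finite (matching D q)"
  by (simp add: matching_def)

lemma matching_subset: "matching D q \<subseteq> D"
  by (auto simp: matching_def)

lemma matching_Un: "matching (A \<union> B) q = matching A q \<union> matching B q"
  by (auto simp: matching_def)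

lemma matching_left_of: "B \<subseteq> {..fst q} \<Longrightarrow> matching B q = {}"
  by (auto simp: matching_def)

lemma matching_inside: "B \<subseteq> {fst q<..<snd q} \<Longrightarrow> matching B q = B"
  by (auto simp: matching_def)

definition take_set :: "nat \<Rightarrow> 'a set \<Rightarrow> 'a set" where
  "take_set k M = (SOME S. S \<subseteq> M \<and> card S = min k (card M))"

lemma take_set:
  assumes "finite M"
  shows "take_set k M \<subseteq> M" and "card (take_set k M) = min k (card M)"
proof -
  have "\<exists>S. S \<subseteq> M \<and> card S = min k (card M)"
    using obtain_subset_with_card_n[of "min k (card M)" M] by auto
  then have "take_set k M \<subseteq> M \<and> card (take_set k M) = min k (card M)"
    unfolding take_set_def by (rule someI_ex)
  then show "take_set k M \<subseteq> M" and "card (take_set k M) = min k (card M)" by auto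
qed

lemma take_set_Un_top_up:
  assumes "finite M" and "finite L" and "M \<inter> L = {}"
    and "F \<subseteq> L" and "card F = min (card L) (k - card M)"
  shows "take_set k M \<union> F \<subseteq> M \<union> L" and "card (take_set k M \<union> F) = min k (card (M \<union> L))"
proof -
  show "take_set k M \<union> F \<subseteq> M \<union> L" using take_set(1)[OF assms(1)] assms(4) by blast
  have "take_set k M \<inter> F = {}" using take_set(1)[OF assms(1)] assms(3,4) by blast
  then have "card (take_set k M \<union> F) = min k (card M) + min (card L) (k - card M)"
    using card_Un_disjoint[of "take_set k M" F] take_set[OF assms(1)] assms(5)
      finite_subset[OF _ assms(1)] finite_subset[OF assms(4,2)] by simp
  also have "\<dots> = min k (card (M \<union> L))" using card_Un_disjoint[OF assms(1-3)] by simp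
  finally show "card (take_set k M \<union> F) = min k (card (M \<union> L))" .
qed

definition harmonic_points :: "real \<Rightarrow> real \<Rightarrow> nat \<Rightarrow> real set" where
  "harmonic_points c e j = (\<lambda>i. c + e / (real i + 2)) ` {..<j}"

lemma harmonic_points_0 [simp]: "harmonic_points c e 0 = {}"
  by (simp add: harmonic_points_def)

lemma finite_harmonic_points [simp]: "finite (harmonic_points c e j)"
  by (simp add: harmonic_points_def)

lemma card_harmonic_points: "0 < e \<Longrightarrow> card (harmonic_points c e j) = j"
  unfolding harmonic_points_def by (subst card_image) (auto simp: inj_on_def field_simps)

lemma harmonic_points_subset:
  assumes "0 < e"
  shows "harmonic_points c e j \<subseteq> {c<..<c + e}"
proof
  fix p assume "p \<in> harmonic_points c e j"
  then obtain i where p: "p = c + e / (real i + 2)" by (auto simp: harmonic_points_def)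
  have "e / (real i + 2) < e" using assms by (simp add: divide_less_eq)
  then show "p \<in> {c<..<c + e}" using assms p by simp
qed

lemma harmonic_points_lower:
  assumes "0 < e" and "j \<le> N" and "p \<in> harmonic_points c e j"
  shows "c + e / (real N + 1) \<le> p"
proof -
  obtain i where "i < j" and p: "p = c + e / (real i + 2)"
    using assms(3) by (auto simp: harmonic_points_def)
  then have "real i + 2 \<le> real N + 1" using assms(2) by simp
  then show ?thesis using assms(1) p by (simp add: frac_le)
qed

lemma harmonic_points_first: "0 < j \<Longrightarrow> c + e / 2 \<in> harmonic_points c e j"
  by (auto simp: harmonic_points_def image_iff intro!: bexI[of _ 0])

locale lazy_adversary =
  fixes v0 vinf :: real and k n :: nat and alg :: algorithm
  assumes v0_less_vinf: "v0 < vinf"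
begin

definition revealed :: "history \<Rightarrow> real set" where
  "revealed h = \<Union> (snd ` set h)"

definition unrevealed :: "history \<Rightarrow> nat" where
  "unrevealed h = n - card (revealed h)"

text \<open>Points of \<open>{v0<..<v0 + query_gap d q}\<close> lie left of \<open>q\<close> if \<open>q\<close> starts above \<open>v0\<close>,
  and inside \<open>q\<close> otherwise; the remaining cases only keep the gap positive on
  ill-formed queries.\<close>

definition query_gap :: "real \<Rightarrow> query \<Rightarrow> real" where
  "query_gap d q = min d (min (if v0 < fst q then fst q - v0 else d)
                              (if v0 < snd q then snd q - v0 else d))"

definition scale :: "history \<Rightarrow> real" where
  "scale h = foldl (\<lambda>d x. query_gap d (fst x) / (real n + 1)) (vinf - v0) h"

definition fresh_count :: "history \<Rightarrow> query \<Rightarrow> nat" where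
  "fresh_count h q = (if v0 < fst q then 0
     else min (unrevealed h) (k - card (matching (revealed h) q)))"

definition adv_answer :: "history \<Rightarrow> query \<Rightarrow> real set" where
  "adv_answer h q = take_set k (matching (revealed h) q)
     \<union> harmonic_points v0 (query_gap (scale h) q) (fresh_count h q)"

primrec adv_run :: "nat \<Rightarrow> history" where
  "adv_run 0 = []"
| "adv_run (Suc m) = (case alg (adv_run m) of
      Query a b \<Rightarrow> adv_run m @ [((a, b), adv_answer (adv_run m) (a, b))]
    | Output t \<Rightarrow> adv_run m)"

definition consistent :: "history \<Rightarrow> bool" where
  "consistent h \<longleftrightarrow> finite (revealed h) \<and> card (revealed h) \<le> min n (k * length h) \<and>
     0 < scale h \<and> scale h \<le> vinf - v0 \<and> revealed h \<subseteq> {v0 + scale h..<vinf}"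

lemma revealed_Nil [simp]: "revealed [] = {}"
  by (simp add: revealed_def)

lemma revealed_snoc [simp]: "revealed (h @ [(q, A)]) = revealed h \<union> A"
  by (auto simp: revealed_def)

lemma scale_Nil [simp]: "scale [] = vinf - v0"
  by (simp add: scale_def)

lemma scale_snoc [simp]: "scale (h @ [(q, A)]) = query_gap (scale h) q / (real n + 1)"
  by (simp add: scale_def)

lemma query_gap_pos: "0 < d \<Longrightarrow> 0 < query_gap d q"
  by (auto simp: query_gap_def)

lemma query_gap_le: "query_gap d q \<le> d"
  by (auto simp: query_gap_def)

lemma query_gap_le_fst: "v0 < fst q \<Longrightarrow> query_gap d q \<le> fst q - v0"
  by (auto simp: query_gap_def)

lemma query_gap_le_snd: "v0 < snd q \<Longrightarrow> query_gap d q \<le> snd q - v0"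
  by (auto simp: query_gap_def)

lemma fresh_count_le: "fresh_count h q \<le> unrevealed h" "fresh_count h q \<le> k"
  by (auto simp: fresh_count_def)

lemma revealed_adv_step:
  assumes "finite (revealed h)"
  shows "revealed (h @ [(q, adv_answer h q)]) =
    revealed h \<union> harmonic_points v0 (query_gap (scale h) q) (fresh_count h q)"
  using take_set(1)[OF finite_matching[OF assms], of k q] matching_subset[of "revealed h" q]
  by (auto simp: adv_answer_def)

lemma consistent_Nil: "consistent []"
  using v0_less_vinf by (simp add: consistent_def)

text \<open>The fresh tuples of a step lie in \<open>[v0 + E / (n + 1), v0 + E)\<close> with
  \<open>E \<le> scale h\<close>: below every revealed tuple, and above the next scale \<open>E / (n + 1)\<close>.\<close>

lemma consistent_adv_step:
  assumes "consistent h"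
  shows "consistent (h @ [(q, adv_answer h q)])"
proof -
  define E where "E = query_gap (scale h) q"
  define F where "F = harmonic_points v0 E (fresh_count h q)"
  have fin: "finite (revealed h)" and card: "card (revealed h) \<le> min n (k * length h)"
    and pos: "0 < scale h" and le: "scale h \<le> vinf - v0"
    and rev: "revealed h \<subseteq> {v0 + scale h..<vinf}"
    using assms by (auto simp: consistent_def)
  have E: "0 < E" "E \<le> scale h" unfolding E_def using query_gap_pos[OF pos] query_gap_le by auto
  have F_interval: "F \<subseteq> {v0<..<v0 + E}" unfolding F_def using harmonic_points_subset[OF E(1)] .
  have "fresh_count h q \<le> n" using fresh_count_le(1)[of h q] by (simp add: unrevealed_def)
  then have F_lower: "F \<subseteq> {v0 + E / (real n + 1)..}"
    unfolding F_def using harmonic_points_lower[OF E(1)] by auto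
  have disj: "revealed h \<inter> F = {}" using rev F_interval E(2) by fastforce
  have "card (revealed h \<union> F) = card (revealed h) + fresh_count h q"
    using card_Un_disjoint[OF fin _ disj] card_harmonic_points[OF E(1)] by (simp add: F_def)
  also have "\<dots> \<le> min n (k * length (h @ [(q, adv_answer h q)]))"
    using card fresh_count_le[of h q] by (simp add: unrevealed_def, arith)
  finally have card': "card (revealed h \<union> F) \<le> min n (k * length (h @ [(q, adv_answer h q)]))" .
  have scale': "E / (real n + 1) \<le> E" using E(1) by (simp add: divide_le_eq)
  have "revealed h \<union> F \<subseteq> {v0 + E / (real n + 1)..<vinf}"
    using rev F_interval F_lower E(2) scale' le by fastforce
  then show ?thesis
    using fin card' E scale' le revealed_adv_step[OF fin, of q]
    by (simp add: consistent_def E_def F_def)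
qed

lemma consistent_adv_run: "consistent (adv_run m)"
  by (induction m) (auto simp: consistent_Nil consistent_adv_step split: action.split)

lemma adv_step_bounds:
  assumes "consistent h"
  shows "revealed (h @ [(q, adv_answer h q)]) \<subseteq> revealed h \<union> {v0<..<v0 + query_gap (scale h) q}"
    and "scale (h @ [(q, adv_answer h q)]) \<le> query_gap (scale h) q"
proof -
  have fin: "finite (revealed h)" and pos: "0 < query_gap (scale h) q"
    using assms query_gap_pos by (auto simp: consistent_def)
  show "revealed (h @ [(q, adv_answer h q)]) \<subseteq> revealed h \<union> {v0<..<v0 + query_gap (scale h) q}"
    using revealed_adv_step[OF fin, of q] harmonic_points_subset[OF pos, of v0 "fresh_count h q"]
    by auto
  show "scale (h @ [(q, adv_answer h q)]) \<le> query_gap (scale h) q"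
    using pos by (simp add: divide_le_eq)
qed

lemma adv_run_Suc_cases:
  obtains "adv_run (Suc m) = adv_run m"
  | q where "adv_run (Suc m) = adv_run m @ [(q, adv_answer (adv_run m) q)]"
  by (cases "alg (adv_run m)") auto

lemma adv_run_Suc_bounds:
  shows "revealed (adv_run m) \<subseteq> revealed (adv_run (Suc m))"
    and "revealed (adv_run (Suc m)) \<subseteq> revealed (adv_run m) \<union> {v0<..<v0 + scale (adv_run m)}"
    and "scale (adv_run (Suc m)) \<le> scale (adv_run m)"
proof -
  note step = adv_step_bounds[OF consistent_adv_run[of m]]
  have gap: "query_gap (scale (adv_run m)) q \<le> scale (adv_run m)" for q
    by (rule query_gap_le)
  show "revealed (adv_run m) \<subseteq> revealed (adv_run (Suc m))"
    by (cases m rule: adv_run_Suc_cases) auto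
  show "revealed (adv_run (Suc m)) \<subseteq> revealed (adv_run m) \<union> {v0<..<v0 + scale (adv_run m)}"
  proof (cases m rule: adv_run_Suc_cases)
    case (2 q)
    have "{v0<..<v0 + query_gap (scale (adv_run m)) q} \<subseteq> {v0<..<v0 + scale (adv_run m)}"
      using gap[of q] by auto
    then show ?thesis using step(1)[of q] 2 by auto
  qed simp
  show "scale (adv_run (Suc m)) \<le> scale (adv_run m)"
  proof (cases m rule: adv_run_Suc_cases)
    case (2 q)
    then show ?thesis using step(2)[of q] gap[of q] by simp
  qed simp
qed

lemma adv_run_mono:
  assumes "m \<le> m'"
  shows "revealed (adv_run m) \<subseteq> revealed (adv_run m')"
    and "scale (adv_run m') \<le> scale (adv_run m)"
  using lift_Suc_mono_le[of "\<lambda>m. revealed (adv_run m)", OF adv_run_Suc_bounds(1) assms]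
    lift_Suc_antimono_le[of "\<lambda>m. scale (adv_run m)", OF adv_run_Suc_bounds(3) assms]
  by auto

lemma revealed_adv_run_later:
  assumes "m \<le> m'"
  shows "revealed (adv_run m') \<subseteq> revealed (adv_run m) \<union> {v0<..<v0 + scale (adv_run m)}"
  using assms
proof (induction rule: dec_induct)
  case (step i)
  have "scale (adv_run i) \<le> scale (adv_run m)" using adv_run_mono(2) step.hyps(1) .
  then show ?case using adv_run_Suc_bounds(2)[of i] step.IH by fastforce
qed simp

definition adv_db :: "nat \<Rightarrow> real \<Rightarrow> real set" where
  "adv_db T e = revealed (adv_run T) \<union> harmonic_points v0 e (unrevealed (adv_run T))"

lemma adv_db:
  assumes "0 < e" and "e \<le> scale (adv_run T)"
  shows "valid_db v0 vinf (adv_db T e)" and "card (adv_db T e) = n"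
proof -
  have fin: "finite (revealed (adv_run T))" and card: "card (revealed (adv_run T)) \<le> n"
    and le: "scale (adv_run T) \<le> vinf - v0"
    and rev: "revealed (adv_run T) \<subseteq> {v0 + scale (adv_run T)..<vinf}"
    using consistent_adv_run[of T] by (auto simp: consistent_def)
  have hidden: "harmonic_points v0 e (unrevealed (adv_run T)) \<subseteq> {v0<..<v0 + e}"
    using harmonic_points_subset[OF assms(1)] .
  have disj: "revealed (adv_run T) \<inter> harmonic_points v0 e (unrevealed (adv_run T)) = {}"
    using rev hidden assms(2) by fastforce
  show "card (adv_db T e) = n"
    using card_Un_disjoint[OF fin _ disj] card_harmonic_points[OF assms(1)] card
    by (simp add: adv_db_def unrevealed_def)
  have "0 < scale (adv_run T)" using assms by linarith
  then show "valid_db v0 vinf (adv_db T e)"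
    using fin rev hidden assms(2) le by (fastforce simp: valid_db_def adv_db_def)
qed

lemma adv_db_at_query:
  assumes e: "0 < e" "e \<le> scale (adv_run T)" and "m < T" and q: "alg (adv_run m) = Query a b"
  defines "h \<equiv> adv_run m" and "E \<equiv> query_gap (scale (adv_run m)) (a, b)"
  shows "revealed h \<subseteq> adv_db T e"
    and "adv_db T e - revealed h \<subseteq> {v0<..<v0 + E}"
    and "card (adv_db T e - revealed h) = unrevealed h"
    and "harmonic_points v0 E (fresh_count h (a, b)) \<subseteq> adv_db T e - revealed h"
proof -
  have fin: "finite (revealed h)" and rev: "revealed h \<subseteq> {v0 + scale h..<vinf}"
    and "0 < scale h" using consistent_adv_run[of m] by (auto simp: consistent_def h_def)
  then have E: "0 < E" "E \<le> scale h" using query_gap_pos query_gap_le by (auto simp: E_def h_def)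
  have Suc_m: "adv_run (Suc m) = h @ [((a, b), adv_answer h (a, b))]" using q by (simp add: h_def)
  have step: "revealed (adv_run (Suc m)) \<subseteq> revealed h \<union> {v0<..<v0 + E}"
    "scale (adv_run (Suc m)) \<le> E"
    using adv_step_bounds[OF consistent_adv_run[of m]] Suc_m by (auto simp: E_def h_def)
  have Suc_T: "Suc m \<le> T" using \<open>m < T\<close> by simp
  have Suc_in_D: "revealed (adv_run (Suc m)) \<subseteq> adv_db T e"
    using adv_run_mono(1)[OF Suc_T] by (auto simp: adv_db_def)
  then show "revealed h \<subseteq> adv_db T e" using Suc_m by auto
  have "revealed (adv_run T) \<subseteq> revealed (adv_run (Suc m)) \<union> {v0<..<v0 + E}"
    using revealed_adv_run_later[OF Suc_T] step(2) by fastforce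
  moreover have "harmonic_points v0 e (unrevealed (adv_run T)) \<subseteq> {v0<..<v0 + E}"
    using harmonic_points_subset[OF e(1)] e(2) adv_run_mono(2)[OF Suc_T] step(2) by fastforce
  ultimately show "adv_db T e - revealed h \<subseteq> {v0<..<v0 + E}"
    using step(1) by (auto simp: adv_db_def)
  show "card (adv_db T e - revealed h) = unrevealed h"
    using card_Diff_subset[OF fin \<open>revealed h \<subseteq> adv_db T e\<close>] adv_db[OF e]
    by (simp add: unrevealed_def)
  have "harmonic_points v0 E (fresh_count h (a, b)) \<subseteq> {v0<..<v0 + E}"
    using harmonic_points_subset[OF E(1)] .
  then have "harmonic_points v0 E (fresh_count h (a, b)) \<inter> revealed h = {}"
    using rev E(2) by fastforce
  moreover have "harmonic_points v0 E (fresh_count h (a, b)) \<subseteq> revealed (adv_run (Suc m))"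
    using revealed_adv_step[OF fin] Suc_m by (simp add: E_def h_def)
  ultimately show "harmonic_points v0 E (fresh_count h (a, b)) \<subseteq> adv_db T e - revealed h"
    using Suc_in_D by blast
qed

text \<open>The fallback only matters for histories the adversary never produces.\<close>

definition adv_ranking :: "real set \<Rightarrow> ranking" where
  "adv_ranking D h q = (if adv_answer h q \<subseteq> matching D q \<and> card (adv_answer h q) = k
     then adv_answer h q else take_set k (matching D q))"

lemma valid_adv_ranking: "finite D \<Longrightarrow> valid_ranking k D (adv_ranking D)"
  using take_set[OF finite_matching] by (auto simp: valid_ranking_def adv_ranking_def)

lemma answer_adv_ranking:
  assumes "finite D" and "adv_answer h q \<subseteq> matching D q"
    and "card (adv_answer h q) = min k (card (matching D q))"
  shows "answer k D (adv_ranking D) h q = adv_answer h q"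
  using assms card_subset_eq[OF finite_matching[OF assms(1)] assms(2)]
  by (auto simp: answer_def adv_ranking_def)

lemma answer_adv_db:
  assumes e: "0 < e" "e \<le> scale (adv_run T)" and "m < T" and q: "alg (adv_run m) = Query a b"
    and valid: "valid_query v0 vinf (a, b)"
  shows "answer k (adv_db T e) (adv_ranking (adv_db T e)) (adv_run m) (a, b) =
    adv_answer (adv_run m) (a, b)"
proof -
  define h D E where "h = adv_run m" and "D = adv_db T e" and "E = query_gap (scale h) (a, b)"
  define M L F where "M = matching (revealed h) (a, b)" and "L = D - revealed h"
    and "F = harmonic_points v0 E (fresh_count h (a, b))"
  note at_query = adv_db_at_query[OF e \<open>m < T\<close> q, folded h_def D_def E_def L_def F_def]
  have D_fin: "finite D" using adv_db(1)[OF e] by (simp add: valid_db_def D_def)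
  have M: "finite M" "M \<subseteq> revealed h"
    using D_fin at_query(1) matching_subset by (auto simp: M_def finite_matching finite_subset)
  have D: "D = revealed h \<union> L" using at_query(1) by (auto simp: L_def)
  have adv: "adv_answer h (a, b) = take_set k M \<union> F" by (simp add: adv_answer_def M_def F_def E_def)
  have "adv_answer h (a, b) \<subseteq> matching D (a, b) \<and>
      card (adv_answer h (a, b)) = min k (card (matching D (a, b)))"
  proof (cases "v0 < a")
    case True
    have "E \<le> a - v0" using query_gap_le_fst[of "(a, b)"] True by (simp add: E_def)
    then have "L \<subseteq> {..a}" using at_query(2) by fastforce
    then have "matching D (a, b) = M" by (simp add: D matching_Un matching_left_of M_def)
    moreover have "F = {}" using True by (simp add: F_def fresh_count_def)
    ultimately show ?thesis using adv take_set[OF M(1)] by simp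
  next
    case False
    then have "a = v0" "v0 < b" using valid by (auto simp: valid_query_def)
    moreover have "E \<le> b - v0" using query_gap_le_snd[of "(a, b)"] \<open>v0 < b\<close> by (simp add: E_def)
    ultimately have "L \<subseteq> {a<..<b}" using at_query(2) by fastforce
    then have match: "matching D (a, b) = M \<union> L"
      by (simp add: D matching_Un matching_inside M_def)
    have L: "finite L" "M \<inter> L = {}" using D_fin M(2) by (auto simp: L_def)
    have "card F = min (card L) (k - card M)"
      using card_harmonic_points query_gap_pos consistent_adv_run[of m] False at_query(3)
      by (simp add: F_def E_def h_def M_def L_def fresh_count_def consistent_def)
    from take_set_Un_top_up[OF M(1) L at_query(4) this] show ?thesis
      using match adv by simp
  qed
  then show ?thesis using answer_adv_ranking[OF D_fin] by (simp add: h_def D_def)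
qed

lemma correct_min_alg_on_adv_db:
  assumes "correct_min_alg v0 vinf k alg" and "0 < n" and e: "0 < e" "e \<le> scale (adv_run T)"
  defines "D \<equiv> adv_db T e"
  shows "alg (run k alg D (adv_ranking D) m) = Query a b \<Longrightarrow> valid_query v0 vinf (a, b)"
    and "\<exists>m. alg (run k alg D (adv_ranking D) m) = Output (Min D)"
proof -
  have "valid_db v0 vinf D" and "card D = n" using adv_db[OF e] by (simp_all add: D_def)
  moreover from this have "valid_ranking k D (adv_ranking D)"
    by (intro valid_adv_ranking) (simp add: valid_db_def)
  moreover have "D \<noteq> {}" using \<open>card D = n\<close> \<open>0 < n\<close> by auto
  ultimately have "(\<forall>m a b. alg (run k alg D (adv_ranking D) m) = Query a b \<longrightarrow>
        valid_query v0 vinf (a, b)) \<and> (\<exists>m. alg (run k alg D (adv_ranking D) m) = Output (Min D))"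
    using assms(1) unfolding correct_min_alg_def by blast
  then show "alg (run k alg D (adv_ranking D) m) = Query a b \<Longrightarrow> valid_query v0 vinf (a, b)"
    and "\<exists>m. alg (run k alg D (adv_ranking D) m) = Output (Min D)"
    by blast+
qed

lemma run_adv_db:
  assumes "correct_min_alg v0 vinf k alg" and "0 < n" and e: "0 < e" "e \<le> scale (adv_run T)"
    and "m \<le> T"
  shows "run k alg (adv_db T e) (adv_ranking (adv_db T e)) m = adv_run m"
  using \<open>m \<le> T\<close>
proof (induction m)
  case (Suc m)
  then have run_m: "run k alg (adv_db T e) (adv_ranking (adv_db T e)) m = adv_run m" by simp
  show ?case
  proof (cases "alg (adv_run m)")
    case (Query a b)
    then have "valid_query v0 vinf (a, b)"
      using correct_min_alg_on_adv_db(1)[OF assms(1-4), of m a b] run_m by simp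
    then show ?thesis
      using answer_adv_db[OF e _ Query] Suc.prems run_m Query by (simp add: Let_def)
  qed (use run_m in \<open>simp add: Let_def\<close>)
qed simp

lemma Min_adv_db:
  assumes e: "0 < e" "e \<le> scale (adv_run T)" and "0 < unrevealed (adv_run T)"
  shows "v0 < Min (adv_db T e)" and "Min (adv_db T e) < v0 + e"
proof -
  have D: "finite (adv_db T e)" "adv_db T e \<subseteq> {v0<..<vinf}"
    using adv_db(1)[OF e] by (auto simp: valid_db_def)
  have first: "v0 + e / 2 \<in> adv_db T e"
    using harmonic_points_first[OF assms(3)] by (simp add: adv_db_def)
  then have "Min (adv_db T e) \<in> adv_db T e" using Min_in[OF D(1)] by blast
  then show "v0 < Min (adv_db T e)" using D(2) by auto
  show "Min (adv_db T e) < v0 + e" using Min_le[OF D(1) first] e(1) by linarith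
qed

lemma length_adv_run_if_no_Output:
  assumes "\<And>i t. alg (adv_run i) \<noteq> Output t"
  shows "length (adv_run m) = m"
proof (induction m)
  case (Suc m)
  obtain a b where "alg (adv_run m) = Query a b"
    using assms by (cases "alg (adv_run m)") auto
  then show ?case using Suc by simp
qed simp

lemma adv_run_eventually_long:
  assumes correct: "correct_min_alg v0 vinf k alg" and "1 \<le> k" and "0 < n"
  shows "\<exists>T. n \<le> k * length (adv_run T)"
proof (rule ccontr)
  assume short: "\<nexists>T. n \<le> k * length (adv_run T)"
  have "\<exists>T t. alg (adv_run T) = Output t"
  proof (rule ccontr)
    assume "\<nexists>T t. alg (adv_run T) = Output t"
    then have "length (adv_run n) = n" by (intro length_adv_run_if_no_Output) blast
    then have "n \<le> k * length (adv_run n)" using \<open>1 \<le> k\<close> by simp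
    then show False using short by blast
  qed
  then obtain T t where out: "alg (adv_run T) = Output t" by blast
  have "k * length (adv_run T) < n" using short by (simp add: not_le)
  then have "card (revealed (adv_run T)) < n"
    using consistent_adv_run[of T] by (simp add: consistent_def)
  then have hidden: "0 < unrevealed (adv_run T)" by (simp add: unrevealed_def)
  define e where "e = (if v0 < t then min (scale (adv_run T)) (t - v0) else scale (adv_run T))"
  have e: "0 < e" "e \<le> scale (adv_run T)"
    using consistent_adv_run[of T] by (auto simp: consistent_def e_def)
  define D where "D = adv_db T e"
  obtain m where "alg (run k alg D (adv_ranking D) m) = Output (Min D)"
    using correct_min_alg_on_adv_db(2)[OF correct \<open>0 < n\<close> e] by (auto simp: D_def)
  moreover have "alg (run k alg D (adv_ranking D) T) = Output t"
    using run_adv_db[OF correct \<open>0 < n\<close> e order.refl] out by (simp add: D_def)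
  ultimately have "Min D = t" by (rule run_Output_unique)
  moreover have "v0 < Min D" and "Min D < v0 + e"
    using Min_adv_db[OF e hidden] by (simp_all add: D_def)
  ultimately show False
    by (cases "v0 < t") (simp_all add: e_def)
qed

lemma adversary_lower_bound:
  assumes correct: "correct_min_alg v0 vinf k alg" and "1 \<le> k" and "0 < n"
  shows "\<exists>D rk. valid_db v0 vinf D \<and> card D = n \<and> valid_ranking k D rk \<and>
           (\<exists>m. alg (run k alg D rk m) = Output (Min D) \<and>
                real (length (run k alg D rk m)) \<ge> real n / real k)"
proof -
  obtain T where long: "n \<le> k * length (adv_run T)"
    using adv_run_eventually_long[OF assms] by blast
  define e where "e = scale (adv_run T)"
  have e: "0 < e" "e \<le> scale (adv_run T)"
    using consistent_adv_run[of T] by (simp_all add: consistent_def e_def)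
  define D where "D = adv_db T e"
  have D: "valid_db v0 vinf D" "card D = n" using adv_db[OF e] by (simp_all add: D_def)
  obtain m where out: "alg (run k alg D (adv_ranking D) m) = Output (Min D)"
    using correct_min_alg_on_adv_db(2)[OF correct \<open>0 < n\<close> e] by (auto simp: D_def)
  have "length (adv_run T) = length (run k alg D (adv_ranking D) T)"
    using run_adv_db[OF correct \<open>0 < n\<close> e order.refl] by (simp add: D_def)
  also have "\<dots> \<le> length (run k alg D (adv_ranking D) m)" using out by (rule length_run_le_Output)
  finally have "n \<le> k * length (run k alg D (adv_ranking D) m)"
    using long by (meson le_trans mult_le_mono2)
  then have "real n \<le> real k * real (length (run k alg D (adv_ranking D) m))"
    by (metis of_nat_le_iff of_nat_mult)
  then have "real n / real k \<le> real (length (run k alg D (adv_ranking D) m))"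
    using \<open>1 \<le> k\<close> by (simp add: divide_le_eq mult.commute)
  moreover have "valid_ranking k D (adv_ranking D)"
    using D(1) by (intro valid_adv_ranking) (simp add: valid_db_def)
  ultimately show ?thesis using D out by blast
qed

end

theorem theorem1:
  fixes v0 vinf :: real and k n :: nat and alg :: algorithm
  assumes "v0 < vinf" and "k \<ge> 1" and "n > 1"
    and "correct_min_alg v0 vinf k alg"
  shows "\<exists>D rk. valid_db v0 vinf D \<and> card D = n \<and> valid_ranking k D rk \<and>
           (\<exists>m. alg (run k alg D rk m) = Output (Min D) \<and>
                real (length (run k alg D rk m)) \<ge> real n / real k)"
proof -
  interpret lazy_adversary v0 vinf k n alg
    using assms(1) by unfold_locales
  show ?thesis using adversary_lower_bound assms(2-4) by simp
qed

end
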